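(* For each natural $l\geq N$ let $w_l$ be a positive extremal function of $\mu_l$ with $\Vert w_l\Vert_\infty=1$. Let $(l_n)$ with $l_n\to\infty$ be such that $w_{l_n}\to w_\infty$ uniformly on $\overline\Omega$, where $w_\infty\in W_0^{1,\infty}(\Omega)\setminus\{0\}$ is nonnegative, $\lim_{l\to\infty}\mu_l=\Lambda_\infty=\Vert\nabla w_\infty\Vert_\infty$ and $0\le w_\infty\le d/\Vert d\Vert_\infty$ a.e. in $\Omega$. Then there exists $x_{\star}\in\Omega$ such that $w_{\infty}(x_{\star})=\Vert w_{\infty}\Vert_{\infty}=1$ and $d(x_{\star})=\Vert d\Vert_{\infty}$.
   Context: $\Omega\subset\mathbb{R}^N$, $N\ge2$, bounded domain; $p\in C^{1}(\overline{\Omega})$ with $1<\inf p\le\sup p<\infty$. Luxemburg norm: $\Vert u\Vert_{r(x)}=\inf\{\gamma>0:\int_{\Omega}|u/\gamma|^{r(x)}\frac{dx}{r(x)}\leq1\}$; $W_0^{1,r(x)}(\Omega)$ is the closure of $C_0^\infty(\Omega)$ in $W^{1,r(x)}(\Omega)$. $\mu_{l}:=\inf\{\Vert \nabla v\Vert_{lp(x)}/\Vert v\Vert_{\infty}: v\in W_{0}^{1,lp(x)}(\Omega)\setminus\{0\}\}$; an extremal function of $\mu_l$ is a minimizer. $d(x)=\operatorname{dist}(x,\partial\Omega)$, $\Lambda_{\infty}:=\inf\{\Vert \nabla v\Vert_{\infty}/\Vert v\Vert_{\infty}:v\in W_{0}^{1,\infty}(\Omega)\setminus\{0\}\}$. 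*)

theory Defs
  imports "HOL-Analysis.Analysis" "HOL-Probability.Essential_Supremum"
begin

coinductive smooth_fun :: "('a::euclidean_space \<Rightarrow> real) \<Rightarrow> bool" where
  "(\<forall>x. f differentiable (at x)) \<Longrightarrow>
   (\<forall>b\<in>Basis. smooth_fun (\<lambda>x. frechet_derivative f (at x) b)) \<Longrightarrow> smooth_fun f"

definition pderiv_dir :: "('a::euclidean_space \<Rightarrow> real) \<Rightarrow> 'a \<Rightarrow> 'a \<Rightarrow> real" where
  "pderiv_dir f b x = frechet_derivative f (at x) b"

definition cgrad :: "('a::euclidean_space \<Rightarrow> real) \<Rightarrow> 'a \<Rightarrow> 'a" where
  "cgrad f x = (\<Sum>b\<in>Basis. pderiv_dir f b x *\<^sub>R b)"

definition test_fun :: "'a::euclidean_space set \<Rightarrow> ('a \<Rightarrow> real) \<Rightarrow> bool" where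
  "test_fun \<Omega> \<phi> \<longleftrightarrow> smooth_fun \<phi> \<and> compact (closure {x. \<phi> x \<noteq> 0})
      \<and> closure {x. \<phi> x \<noteq> 0} \<subseteq> \<Omega>"

definition weak_grad :: "'a::euclidean_space set \<Rightarrow> ('a \<Rightarrow> real) \<Rightarrow> ('a \<Rightarrow> 'a) \<Rightarrow> bool" where
  "weak_grad \<Omega> u g \<longleftrightarrow>
     u \<in> borel_measurable (lebesgue_on \<Omega>) \<and> g \<in> borel_measurable (lebesgue_on \<Omega>) \<and>
     (\<forall>K. compact K \<and> K \<subseteq> \<Omega> \<longrightarrow> integrable (lebesgue_on K) u \<and> integrable (lebesgue_on K) (\<lambda>x. norm (g x))) \<and>
     (\<forall>\<phi>. test_fun \<Omega> \<phi> \<longrightarrow> (\<forall>b\<in>Basis.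
        integral\<^sup>L (lebesgue_on \<Omega>) (\<lambda>x. u x * pderiv_dir \<phi> b x)
          = - integral\<^sup>L (lebesgue_on \<Omega>) (\<lambda>x. (g x \<bullet> b) * \<phi> x)))"

definition modular :: "'a::euclidean_space set \<Rightarrow> ('a \<Rightarrow> real) \<Rightarrow> ('a \<Rightarrow> real) \<Rightarrow> ennreal" where
  "modular \<Omega> r f = (\<integral>\<^sup>+ x. ennreal (\<bar>f x\<bar> powr r x / r x) \<partial>(lebesgue_on \<Omega>))"

definition lux_norm :: "'a::euclidean_space set \<Rightarrow> ('a \<Rightarrow> real) \<Rightarrow> ('a \<Rightarrow> real) \<Rightarrow> real" where
  "lux_norm \<Omega> r f = Inf {\<gamma>. \<gamma> > 0 \<and> modular \<Omega> r (\<lambda>x. f x / \<gamma>) \<le> 1}"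

definition in_Lr :: "'a::euclidean_space set \<Rightarrow> ('a \<Rightarrow> real) \<Rightarrow> ('a \<Rightarrow> real) \<Rightarrow> bool" where
  "in_Lr \<Omega> r f \<longleftrightarrow> f \<in> borel_measurable (lebesgue_on \<Omega>) \<and>
      (\<exists>\<gamma>>0. modular \<Omega> r (\<lambda>x. f x / \<gamma>) \<le> 1)"

definition sob :: "'a::euclidean_space set \<Rightarrow> ('a \<Rightarrow> real) \<Rightarrow> ('a \<Rightarrow> real) \<Rightarrow> ('a \<Rightarrow> 'a) \<Rightarrow> bool" where
  "sob \<Omega> r u g \<longleftrightarrow> weak_grad \<Omega> u g \<and> in_Lr \<Omega> r u \<and> in_Lr \<Omega> r (\<lambda>x. norm (g x))"

definition sob0 :: "'a::euclidean_space set \<Rightarrow> ('a \<Rightarrow> real) \<Rightarrow> ('a \<Rightarrow> real) \<Rightarrow> ('a \<Rightarrow> 'a) \<Rightarrow> bool" where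
  "sob0 \<Omega> r u g \<longleftrightarrow> sob \<Omega> r u g \<and>
     (\<exists>\<phi>::nat \<Rightarrow> 'a \<Rightarrow> real. (\<forall>k. test_fun \<Omega> (\<phi> k)) \<and>
        ((\<lambda>k. lux_norm \<Omega> r (\<lambda>x. \<phi> k x - u x)
              + lux_norm \<Omega> r (\<lambda>x. norm (cgrad (\<phi> k) x - g x))) \<longlonglongrightarrow> 0))"

definition Linf_norm :: "'a::euclidean_space set \<Rightarrow> ('a \<Rightarrow> real) \<Rightarrow> real" where
  "Linf_norm \<Omega> f = real_of_ereal (esssup (lebesgue_on \<Omega>) (\<lambda>x. ereal \<bar>f x\<bar>))"

definition in_Linf :: "'a::euclidean_space set \<Rightarrow> ('a \<Rightarrow> real) \<Rightarrow> bool" where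
  "in_Linf \<Omega> f \<longleftrightarrow> f \<in> borel_measurable (lebesgue_on \<Omega>) \<and>
      esssup (lebesgue_on \<Omega>) (\<lambda>x. ereal \<bar>f x\<bar>) < \<infinity>"

definition ae_zero :: "'a::euclidean_space set \<Rightarrow> ('a \<Rightarrow> real) \<Rightarrow> bool" where
  "ae_zero \<Omega> v \<longleftrightarrow> (AE x in lebesgue_on \<Omega>. v x = 0)"

(* W^{1,infinity} and W_0^{1,infinity} = W^{1,infinity} \<inter> W_0^{1,q} for every constant q \<ge> 1 *)
definition sob_inf :: "'a::euclidean_space set \<Rightarrow> ('a \<Rightarrow> real) \<Rightarrow> ('a \<Rightarrow> 'a) \<Rightarrow> bool" where
  "sob_inf \<Omega> u g \<longleftrightarrow> weak_grad \<Omega> u g \<and> in_Linf \<Omega> u \<and> in_Linf \<Omega> (\<lambda>x. norm (g x))"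

definition sob0_inf :: "'a::euclidean_space set \<Rightarrow> ('a \<Rightarrow> real) \<Rightarrow> ('a \<Rightarrow> 'a) \<Rightarrow> bool" where
  "sob0_inf \<Omega> u g \<longleftrightarrow> sob_inf \<Omega> u g \<and> (\<forall>q::real. q \<ge> 1 \<longrightarrow> sob0 \<Omega> (\<lambda>_. q) u g)"

definition mu :: "'a::euclidean_space set \<Rightarrow> ('a \<Rightarrow> real) \<Rightarrow> nat \<Rightarrow> real" where
  "mu \<Omega> p l = Inf {lux_norm \<Omega> (\<lambda>x. real l * p x) (\<lambda>x. norm (g x)) / Linf_norm \<Omega> v | v g.
                     sob0 \<Omega> (\<lambda>x. real l * p x) v g \<and> \<not> ae_zero \<Omega> v}"

definition extremal :: "'a::euclidean_space set \<Rightarrow> ('a \<Rightarrow> real) \<Rightarrow> nat \<Rightarrow> ('a \<Rightarrow> real) \<Rightarrow> bool" where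
  "extremal \<Omega> p l w \<longleftrightarrow> (\<exists>g. sob0 \<Omega> (\<lambda>x. real l * p x) w g \<and> \<not> ae_zero \<Omega> w \<and>
      lux_norm \<Omega> (\<lambda>x. real l * p x) (\<lambda>x. norm (g x)) / Linf_norm \<Omega> w = mu \<Omega> p l)"

definition Lambda_inf :: "'a::euclidean_space set \<Rightarrow> real" where
  "Lambda_inf \<Omega> = Inf {Linf_norm \<Omega> (\<lambda>x. norm (g x)) / Linf_norm \<Omega> v | v g.
                     sob0_inf \<Omega> v g \<and> \<not> ae_zero \<Omega> v}"

definition dist_bd :: "'a::euclidean_space set \<Rightarrow> 'a \<Rightarrow> real" where
  "dist_bd \<Omega> x = infdist x (frontier \<Omega>)"

definition C1_closure :: "'a::euclidean_space set \<Rightarrow> ('a \<Rightarrow> real) \<Rightarrow> bool" where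
  "C1_closure \<Omega> p \<longleftrightarrow> continuous_on (closure \<Omega>) p \<and>
     (\<exists>p'. (\<forall>x\<in>\<Omega>. (p has_derivative p' x) (at x)) \<and>
           (\<forall>b. continuous_on \<Omega> (\<lambda>x. p' x b)) \<and>
           (\<forall>b. \<exists>h. continuous_on (closure \<Omega>) h \<and> (\<forall>x\<in>\<Omega>. h x = p' x b)))"

end

theory Submission
  imports Defs
begin

text \<open>For continuous functions the essential supremum over an open set is the maximum over its
closure. Hence the uniform limit \<open>w\<^sub>\<infinity>\<close> of the normalised extremals has norm 1 and attains it
at some \<open>x\<^sub>\<star>\<close> in the closure of \<open>\<Omega>\<close>. The a.e. bound \<open>w\<^sub>\<infinity> \<le> d / \<parallel>d\<parallel>\<^sub>\<infinity>\<close> holds everywhere on the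
closure by continuity, so \<open>d(x\<^sub>\<star>) \<ge> \<parallel>d\<parallel>\<^sub>\<infinity> > 0\<close>: thus \<open>x\<^sub>\<star>\<close> is not a boundary point and \<open>d\<close> is
maximal there.\<close>

lemma AE_le_imp_le_open:
  fixes f :: "'a::euclidean_space \<Rightarrow> real"
  assumes S: "open S" and f: "continuous_on S f"
    and ae: "AE x in lebesgue_on S. f x \<le> c" and x: "x \<in> S"
  shows "f x \<le> c"
proof (rule ccontr)
  assume nx: "\<not> f x \<le> c"
  let ?U = "S \<inter> f -` {c<..}"
  have U: "open ?U" by (rule continuous_open_preimage) (use S f in auto)
  have Sm: "S \<inter> space lebesgue \<in> sets lebesgue" using S by simp
  have "AE y in lebesgue. y \<in> S \<longrightarrow> f y \<le> c"
    using ae AE_restrict_space_iff[OF Sm] by simp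
  then have "AE y \<in> ?U in lebesgue. y \<in> - ?U"
    by eventually_elim auto
  moreover have "x \<in> ?U" using nx x by auto
  ultimately have "x \<in> - ?U" by (rule mem_closed_if_AE_lebesgue_open[OF U closed_Compl[OF U]])
  then show False using nx x by auto
qed

lemma AE_le_imp_le_on_closure:
  fixes f :: "'a::euclidean_space \<Rightarrow> real"
  assumes S: "open S" and f: "continuous_on (closure S) f"
    and ae: "AE x in lebesgue_on S. f x \<le> c" and x: "x \<in> closure S"
  shows "f x \<le> c"
proof (rule continuous_le_on_closure[OF f x])
  have "continuous_on S f" using f closure_subset continuous_on_subset by blast
  then show "\<And>y. y \<in> S \<Longrightarrow> f y \<le> c" using AE_le_imp_le_open[OF S _ ae] by blast
qed

lemma Linf_norm_le:
  fixes f :: "'a::euclidean_space \<Rightarrow> real"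
  assumes b: "\<And>x. x \<in> S \<Longrightarrow> \<bar>f x\<bar> \<le> c" and c: "0 \<le> c"
  shows "Linf_norm S f \<le> c"
proof (cases "(\<lambda>x. ereal \<bar>f x\<bar>) \<in> borel_measurable (lebesgue_on S)")
  case True
  have "AE x in lebesgue_on S. ereal \<bar>f x\<bar> \<le> ereal c"
    by (rule AE_I2) (use b in auto)
  then have "esssup (lebesgue_on S) (\<lambda>x. ereal \<bar>f x\<bar>) \<le> ereal c"
    using True by (rule esssup_I[rotated])
  then show ?thesis unfolding Linf_norm_def using c
    by (cases "esssup (lebesgue_on S) (\<lambda>x. ereal \<bar>f x\<bar>)") auto
next
  case False
  then show ?thesis unfolding Linf_norm_def using c
    by (simp add: esssup_non_measurable top_ereal_def)
qed

lemma abs_le_Linf_norm_on_closure: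
  fixes f :: "'a::euclidean_space \<Rightarrow> real"
  assumes S: "open S" and f: "continuous_on (closure S) f"
    and b: "\<And>x. x \<in> S \<Longrightarrow> \<bar>f x\<bar> \<le> c" and x: "x \<in> closure S"
  shows "\<bar>f x\<bar> \<le> Linf_norm S f"
proof -
  let ?e = "esssup (lebesgue_on S) (\<lambda>x. ereal \<bar>f x\<bar>)"
  have fS: "continuous_on S (\<lambda>y. ereal \<bar>f y\<bar>)"
    using continuous_on_subset[OF f closure_subset] by (intro continuous_intros)
  have "(\<lambda>y. ereal \<bar>f y\<bar>) \<in> borel_measurable (lebesgue_on S)"
    by (rule continuous_imp_measurable_on_sets_lebesgue[OF fS]) (use S in simp)
  moreover have "AE y in lebesgue_on S. ereal \<bar>f y\<bar> \<le> ereal c"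
    by (rule AE_I2) (use b in auto)
  ultimately have fin: "?e \<le> ereal c" by (rule esssup_I)
  have ae: "AE y in lebesgue_on S. ereal \<bar>f y\<bar> \<le> ?e" by (rule esssup_AE)
  have fa: "continuous_on (closure S) (\<lambda>y. \<bar>f y\<bar>)" using f by (intro continuous_intros)
  show ?thesis
  proof (cases ?e)
    case (real r)
    have "AE y in lebesgue_on S. \<bar>f y\<bar> \<le> r" using ae real by simp
    from AE_le_imp_le_on_closure[OF S fa this x] show ?thesis
      unfolding Linf_norm_def real by simp
  next
    case MInf
    have "AE y in lebesgue_on S. (1::real) \<le> 0" using ae MInf by simp
    from AE_le_imp_le_open[OF S _ this] have "S = {}" by auto
    with x show ?thesis by simp
  qed (use fin in simp)
qed

lemma Linf_norm_attained_on_closure: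
  fixes f :: "'a::euclidean_space \<Rightarrow> real"
  assumes S: "open S" "bounded S" "S \<noteq> {}" and f: "continuous_on (closure S) f"
  obtains x where "x \<in> closure S" "\<bar>f x\<bar> = Linf_norm S f"
    and "\<And>y. y \<in> closure S \<Longrightarrow> \<bar>f y\<bar> \<le> Linf_norm S f"
proof -
  have "continuous_on (closure S) (\<lambda>y. \<bar>f y\<bar>)" using f by (intro continuous_intros)
  then obtain x where x: "x \<in> closure S" and max: "\<And>y. y \<in> closure S \<Longrightarrow> \<bar>f y\<bar> \<le> \<bar>f x\<bar>"
    using continuous_attains_sup[OF compact_closure[THEN iffD2, OF S(2)]] S(3) closure_subset
    by (metis all_not_in_conv subset_empty)
  have le: "\<And>y. y \<in> closure S \<Longrightarrow> \<bar>f y\<bar> \<le> Linf_norm S f"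
    using abs_le_Linf_norm_on_closure[OF S(1) f] max closure_subset by blast
  have "Linf_norm S f \<le> \<bar>f x\<bar>"
    using Linf_norm_le[of S f "\<bar>f x\<bar>"] max closure_subset by auto
  with le[OF x] show thesis by (intro that[OF x _ le]) simp_all
qed

lemma Linf_norm_uniform_limit:
  fixes f :: "nat \<Rightarrow> 'a::euclidean_space \<Rightarrow> real"
  assumes S: "open S" "bounded S" "S \<noteq> {}"
    and cont: "\<And>n. continuous_on (closure S) (f n)"
    and unif: "uniform_limit (closure S) f g sequentially"
  shows "(\<lambda>n. Linf_norm S (f n)) \<longlonglongrightarrow> Linf_norm S g"
proof (rule LIMSEQ_I)
  fix e :: real assume e: "e > 0"
  have g: "continuous_on (closure S) g"
    by (rule uniform_limit_theorem[OF _ unif]) (use cont in auto)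
  from uniform_limitD[OF unif half_gt_zero[OF e]] obtain N where
    N: "\<And>n x. n \<ge> N \<Longrightarrow> x \<in> closure S \<Longrightarrow> \<bar>f n x - g x\<bar> < e / 2"
    unfolding eventually_sequentially dist_real_def by blast
  have close: "Linf_norm S h \<le> Linf_norm S k + e / 2"
    if h: "continuous_on (closure S) h" and k: "continuous_on (closure S) k"
      and hk: "\<And>x. x \<in> closure S \<Longrightarrow> \<bar>h x - k x\<bar> < e / 2" for h k
  proof -
    obtain x where x: "x \<in> closure S" "\<bar>h x\<bar> = Linf_norm S h"
      using Linf_norm_attained_on_closure[OF S h] by metis
    obtain y where "y \<in> closure S" "\<bar>k y\<bar> = Linf_norm S k"
      and kle: "\<And>z. z \<in> closure S \<Longrightarrow> \<bar>k z\<bar> \<le> Linf_norm S k"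
      using Linf_norm_attained_on_closure[OF S k] by metis
    have "\<bar>h x\<bar> \<le> \<bar>k x\<bar> + e / 2" using hk[OF x(1)] by linarith
    with x kle[OF x(1)] show ?thesis by linarith
  qed
  have "\<bar>Linf_norm S (f n) - Linf_norm S g\<bar> < e" if n: "n \<ge> N" for n
    using close[OF cont g N[OF n]] close[OF g cont, of n] N[OF n] e
    by (smt (verit, best) abs_minus_commute field_sum_of_halves)
  then show "\<exists>N. \<forall>n\<ge>N. norm (Linf_norm S (f n) - Linf_norm S g) < e"
    by auto
qed

theorem mainTheorem4:
  fixes \<Omega> :: "'a::euclidean_space set" and p :: "'a \<Rightarrow> real"
    and w :: "nat \<Rightarrow> 'a \<Rightarrow> real" and winf :: "'a \<Rightarrow> real" and ls :: "nat \<Rightarrow> nat"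
    and ginf :: "'a \<Rightarrow> 'a"
  assumes dim: "DIM('a) \<ge> 2"
    and dom: "open \<Omega>" "connected \<Omega>" "bounded \<Omega>" "\<Omega> \<noteq> {}"
    and pC1: "C1_closure \<Omega> p"
    and pbd: "\<exists>a b. 1 < a \<and> (\<forall>x\<in>closure \<Omega>. a \<le> p x \<and> p x \<le> b)"
    and wext: "\<And>l. l \<ge> DIM('a) \<Longrightarrow> extremal \<Omega> p l (w l)"
    and wpos: "\<And>l x. l \<ge> DIM('a) \<Longrightarrow> x \<in> \<Omega> \<Longrightarrow> w l x > 0"
    and wcont: "\<And>l. l \<ge> DIM('a) \<Longrightarrow> continuous_on (closure \<Omega>) (w l)"
    and wnorm: "\<And>l. l \<ge> DIM('a) \<Longrightarrow> Linf_norm \<Omega> (w l) = 1"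
    and ls_ge: "\<And>n. ls n \<ge> DIM('a)"
    and ls_lim: "filterlim ls at_top sequentially"
    and unif: "uniform_limit (closure \<Omega>) (\<lambda>n. w (ls n)) winf sequentially"
    and winf_sob: "sob0_inf \<Omega> winf ginf" and winf_nz: "\<not> ae_zero \<Omega> winf"
    and winf_nonneg: "\<And>x. x \<in> closure \<Omega> \<Longrightarrow> winf x \<ge> 0"
    and mu_lim: "(\<lambda>l. mu \<Omega> p l) \<longlonglongrightarrow> Lambda_inf \<Omega>"
    and Lam: "Lambda_inf \<Omega> = Linf_norm \<Omega> (\<lambda>x. norm (ginf x))"
    and wd: "AE x in lebesgue_on \<Omega>. 0 \<le> winf x \<and> winf x \<le> dist_bd \<Omega> x / Linf_norm \<Omega> (dist_bd \<Omega>)"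
  shows "\<exists>xs\<in>\<Omega>. winf xs = Linf_norm \<Omega> winf \<and> Linf_norm \<Omega> winf = 1
              \<and> dist_bd \<Omega> xs = Linf_norm \<Omega> (dist_bd \<Omega>)"
proof -
  note \<Omega> = dom(1,3,4)
  define d where "d = dist_bd \<Omega>"
  define D where "D = Linf_norm \<Omega> d"
  have wn_cont: "\<And>n. continuous_on (closure \<Omega>) (w (ls n))" using wcont ls_ge by blast
  have wc: "continuous_on (closure \<Omega>) winf"
    by (rule uniform_limit_theorem[OF _ unif]) (use wn_cont in auto)
  have dc: "continuous_on (closure \<Omega>) d" unfolding d_def dist_bd_def by (intro continuous_intros)
  have "(\<lambda>n. Linf_norm \<Omega> (w (ls n))) \<longlonglongrightarrow> Linf_norm \<Omega> winf"
    by (rule Linf_norm_uniform_limit[OF \<Omega> wn_cont unif])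
  then have norm1: "Linf_norm \<Omega> winf = 1" using wnorm[OF ls_ge] by (simp add: LIMSEQ_const_iff)
  obtain xs where xs: "xs \<in> closure \<Omega>" "winf xs = 1"
    using Linf_norm_attained_on_closure[OF \<Omega> wc] winf_nonneg norm1 by (metis abs_of_nonneg)
  have "AE x in lebesgue_on \<Omega>. winf x - d x / D \<le> 0"
    using wd unfolding d_def D_def by eventually_elim simp
  moreover have "continuous_on (closure \<Omega>) (\<lambda>x. winf x - d x / D)"
    using wc dc unfolding divide_inverse by (intro continuous_intros)
  ultimately have "1 \<le> d xs / D"
    using AE_le_imp_le_on_closure[OF dom(1) _ _ xs(1)] xs(2) by fastforce
  moreover have "d xs \<le> D"
    using Linf_norm_attained_on_closure[OF \<Omega> dc] xs(1) unfolding D_def by (metis abs_le_D1)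
  moreover have "0 \<le> d xs" unfolding d_def dist_bd_def by (rule infdist_nonneg)
  ultimately have D: "D > 0" "d xs = D"
    by (smt (verit) divide_nonneg_nonpos le_divide_eq_1_pos)+
  then have "xs \<notin> frontier \<Omega>" unfolding d_def dist_bd_def by auto
  then have "xs \<in> \<Omega>" using xs(1) dom(1) by (simp add: frontier_def interior_open)
  with xs(2) norm1 D show ?thesis unfolding d_def D_def by auto
qed

end
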